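(* Let $p$ be a prime number and let $A=\{1,p,p^2,p^3,\dots\}$. For every positive integer $n$, $$\sum_{k=1}^{n}N^p_A(k)\big(q^e_A(n-k)-q^o_A(n-k)\big)=\vartheta_p(n)+1.$$
   Context: For a set $A$ of positive integers, $N^p_A(n)$ is the total number of parts, summed over all partitions of $n$ with parts in $A$. $q^e_A(m)$ (resp. $q^o_A(m)$) is the number of partitions of $m$ into pairwise distinct parts from $A$ with an even (resp. odd) number of parts; $q^e_A(0)=1$, $q^o_A(0)=0$. $\vartheta_p(n)$ is the $p$-adic valuation of $n$. *)

theory Defs
  imports "HOL-Library.Multiset" "HOL-Computational_Algebra.Primes"
begin

definition partitions_in :: "nat set \<Rightarrow> nat \<Rightarrow> nat multiset set" where
  "partitions_in A n = {M. set_mset M \<subseteq> A \<and> 0 \<notin># M \<and> sum_mset M = n}"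

definition Np :: "nat set \<Rightarrow> nat \<Rightarrow> nat" where
  "Np A n = (\<Sum>M\<in>partitions_in A n. size M)"

definition distinct_partitions_in :: "nat set \<Rightarrow> nat \<Rightarrow> nat set set" where
  "distinct_partitions_in A m = {S. finite S \<and> S \<subseteq> A \<and> 0 \<notin> S \<and> \<Sum>S = m}"

definition q_even :: "nat set \<Rightarrow> nat \<Rightarrow> nat" where
  "q_even A m = card {S \<in> distinct_partitions_in A m. even (card S)}"

definition q_odd :: "nat set \<Rightarrow> nat \<Rightarrow> nat" where
  "q_odd A m = card {S \<in> distinct_partitions_in A m. odd (card S)}"

end

theory Submission
  imports Defs "HOL-Computational_Algebra.Formal_Power_Series"
begin

text \<open>
  Only parts \<open>\<le> n\<close> matter, so \<open>A\<close> may be replaced by the finite set \<open>B = A \<inter> {1..n}\<close>.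
  For finite \<open>B\<close>, the generating function of partitions with parts in \<open>B\<close> is
  \<open>C = \<Prod>b\<in>B. 1/(1 - x^b)\<close>, that of \<open>q\<^sup>e - q\<^sup>o\<close> is its inverse \<open>\<Prod>b\<in>B. (1 - x^b)\<close>, and
  counting the parts equal to \<open>b\<close> separately gives \<open>\<Sum>n. N(n) x^n = C \<cdot> \<Sum>b\<in>B. x^b/(1 - x^b)\<close>.
  Hence the convolution in the theorem is the \<open>n\<close>-th coefficient of \<open>\<Sum>b\<in>B. x^b/(1 - x^b)\<close>,
  i.e. the number of divisors of \<open>n\<close> in \<open>A\<close>; for \<open>A\<close> the powers of \<open>p\<close> these are
  \<open>p\<^sup>0, \<dots>, p\<^sup>v\<close> with \<open>v = \<vartheta>\<^sub>p(n)\<close>.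
\<close>

lemma partitions_in_empty: "partitions_in {} n = (if n = 0 then {{#}} else {})"
  unfolding partitions_in_def by auto

lemma partitions_in_zero: "partitions_in A 0 = {{#}}"
  unfolding partitions_in_def by (auto simp: sum_mset_0_iff) (metis multiset_nonemptyE)

lemma partitions_in_insert:
  assumes "b \<notin> B" "b > 0"
  shows "partitions_in (insert b B) n =
     (\<Union>j\<le>n div b. (\<lambda>M. M + replicate_mset j b) ` partitions_in B (n - j * b))"
proof (intro equalityI subsetI)
  fix M assume M: "M \<in> partitions_in (insert b B) n"
  define j where "j = count M b"
  define M0 where "M0 = filter_mset (\<lambda>x. x \<noteq> b) M"
  have M_eq: "M = M0 + replicate_mset j b"
    unfolding M0_def j_def using multiset_partition[of M "\<lambda>x. x \<noteq> b"]
    by (metis (mono_tags, lifting) filter_eq_replicate_mset filter_mset_cong union_commute not_not)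
  have sum_M: "sum_mset M = sum_mset M0 + j * b"
    by (subst M_eq) (simp add: sum_mset_replicate_mset)
  moreover have "sum_mset M = n" using M by (simp add: partitions_in_def)
  ultimately have "j \<le> n div b"
    using assms(2) by (simp add: less_eq_div_iff_mult_less_eq)
  moreover have "M0 \<in> partitions_in B (n - j * b)"
    using M sum_M unfolding partitions_in_def M0_def by auto
  ultimately show "M \<in> (\<Union>j\<le>n div b. (\<lambda>M. M + replicate_mset j b) ` partitions_in B (n - j * b))"
    using M_eq by blast
next
  fix M' assume "M' \<in> (\<Union>j\<le>n div b. (\<lambda>M. M + replicate_mset j b) ` partitions_in B (n - j * b))"
  then obtain j M where "j \<le> n div b" and M: "M \<in> partitions_in B (n - j * b)"
    and M': "M' = M + replicate_mset j b"
    by blast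
  then have "j * b \<le> n" using assms(2) by (simp add: less_eq_div_iff_mult_less_eq)
  then show "M' \<in> partitions_in (insert b B) n"
    using M assms unfolding partitions_in_def M' by (auto simp: sum_mset_replicate_mset)
qed

lemma partitions_in_insert_disjoint:
  assumes "b \<notin> B" "i \<noteq> j"
  shows "(\<lambda>M. M + replicate_mset i b) ` partitions_in B m \<inter>
         (\<lambda>M. M + replicate_mset j b) ` partitions_in B m' = {}"
proof -
  have count_b: "count (M + replicate_mset k b) b = k" if "M \<in> partitions_in B l" for M k l
    using that assms(1) by (auto simp: partitions_in_def count_eq_zero_iff)
  show ?thesis
  proof (rule ccontr)
    assume "\<not> ?thesis"
    then obtain M M' where "M \<in> partitions_in B m" "M' \<in> partitions_in B m'"
      and "M + replicate_mset i b = M' + replicate_mset j b"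
      by blast
    then have "i = j" by (metis count_b)
    with assms(2) show False ..
  qed
qed

lemma finite_partitions_in: "finite B \<Longrightarrow> 0 \<notin> B \<Longrightarrow> finite (partitions_in B n)"
proof (induction B arbitrary: n rule: finite_induct)
  case empty
  then show ?case by (simp add: partitions_in_empty)
next
  case (insert b B)
  then show ?case by (subst partitions_in_insert) auto
qed

lemma card_partitions_in_insert:
  assumes "finite B" "0 \<notin> insert b B" "b \<notin> B"
  shows "card (partitions_in (insert b B) n) = (\<Sum>j\<le>n div b. card (partitions_in B (n - j * b)))"
proof -
  have "card (partitions_in (insert b B) n) =
      (\<Sum>j\<le>n div b. card ((\<lambda>M. M + replicate_mset j b) ` partitions_in B (n - j * b)))"
    using assms by (subst partitions_in_insert, simp_all, intro card_UN_disjoint)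
      (auto intro: finite_partitions_in dest: partitions_in_insert_disjoint)
  also have "\<dots> = (\<Sum>j\<le>n div b. card (partitions_in B (n - j * b)))"
    by (intro sum.cong refl card_image) (auto simp: inj_on_def)
  finally show ?thesis .
qed

lemma Np_insert:
  assumes "finite B" "0 \<notin> insert b B" "b \<notin> B"
  shows "Np (insert b B) n =
     (\<Sum>j\<le>n div b. Np B (n - j * b) + j * card (partitions_in B (n - j * b)))"
proof -
  have "Np (insert b B) n =
      (\<Sum>j\<le>n div b. \<Sum>M\<in>(\<lambda>M. M + replicate_mset j b) ` partitions_in B (n - j * b). size M)"
    unfolding Np_def using assms
    by (subst partitions_in_insert, simp_all, intro sum.UNION_disjoint)
      (auto intro: finite_partitions_in dest: partitions_in_insert_disjoint)
  also have "\<dots> = (\<Sum>j\<le>n div b. \<Sum>M\<in>partitions_in B (n - j * b). size M + j)"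
    by (rule sum.cong; simp) (subst sum.reindex, auto simp: inj_on_def)
  also have "\<dots> = (\<Sum>j\<le>n div b. Np B (n - j * b) + j * card (partitions_in B (n - j * b)))"
    by (simp add: Np_def sum.distrib mult.commute)
  finally show ?thesis .
qed

lemma partitions_in_restrict:
  assumes "k \<le> n"
  shows "partitions_in (A \<inter> {1..n}) k = partitions_in A k"
proof -
  have "x \<le> n" if "M \<in> partitions_in A k" "x \<in># M" for M x
    using that assms multi_member_split[of x M] by (auto simp: partitions_in_def)
  then show ?thesis
    unfolding partitions_in_def by (auto simp: Suc_le_eq) (metis gr0I)
qed

lemma distinct_partitions_in_empty: "distinct_partitions_in {} n = (if n = 0 then {{}} else {})"
  unfolding distinct_partitions_in_def by auto

lemma finite_distinct_partitions_in: "finite B \<Longrightarrow> finite (distinct_partitions_in B n)"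
  unfolding distinct_partitions_in_def by (rule finite_subset[of _ "Pow B"]) auto

lemma distinct_partitions_in_insert:
  assumes "b \<notin> B" "b > 0"
  shows "{S \<in> distinct_partitions_in (insert b B) n. P (card S)} =
     {S \<in> distinct_partitions_in B n. P (card S)} \<union>
     insert b ` {S \<in> distinct_partitions_in B (n - b). P (Suc (card S)) \<and> b \<le> n}"
proof (intro equalityI subsetI)
  fix S assume "S \<in> {S \<in> distinct_partitions_in (insert b B) n. P (card S)}"
  then have S: "finite S" "S \<subseteq> insert b B" "0 \<notin> S" "\<Sum>S = n" "P (card S)"
    by (simp_all add: distinct_partitions_in_def)
  show "S \<in> {S \<in> distinct_partitions_in B n. P (card S)} \<union>
     insert b ` {S \<in> distinct_partitions_in B (n - b). P (Suc (card S)) \<and> b \<le> n}"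
  proof (cases "b \<in> S")
    case True
    have "\<Sum>S = b + \<Sum>(S - {b})" "card S = Suc (card (S - {b}))"
      using sum.remove[OF S(1) True, of "\<lambda>x. x"] card.remove[OF S(1) True] by simp_all
    with S have "S - {b} \<in> {S \<in> distinct_partitions_in B (n - b). P (Suc (card S)) \<and> b \<le> n}"
      unfolding distinct_partitions_in_def by auto
    moreover have "S = insert b (S - {b})" using True by blast
    ultimately show ?thesis by blast
  next
    case False
    with S show ?thesis unfolding distinct_partitions_in_def by auto
  qed
next
  fix S assume "S \<in> {S \<in> distinct_partitions_in B n. P (card S)} \<union>
     insert b ` {S \<in> distinct_partitions_in B (n - b). P (Suc (card S)) \<and> b \<le> n}"
  then consider "S \<in> {S \<in> distinct_partitions_in B n. P (card S)}"
    | T where "T \<in> distinct_partitions_in B (n - b)" "P (Suc (card T))" "b \<le> n" "S = insert b T"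
    by blast
  then show "S \<in> {S \<in> distinct_partitions_in (insert b B) n. P (card S)}"
  proof cases
    case (2 T)
    then have T: "finite T" "T \<subseteq> B" "0 \<notin> T" "\<Sum>T = n - b"
      by (simp_all add: distinct_partitions_in_def)
    moreover have "b \<notin> T" using T(2) assms(1) by blast
    ultimately show ?thesis
      using 2 assms(2) unfolding distinct_partitions_in_def by auto
  qed (auto simp: distinct_partitions_in_def)
qed

lemma card_distinct_partitions_in_insert:
  assumes "finite B" "b \<notin> B" "b > 0"
  shows "card {S \<in> distinct_partitions_in (insert b B) n. P (card S)} =
     card {S \<in> distinct_partitions_in B n. P (card S)} +
     (if b \<le> n then card {S \<in> distinct_partitions_in B (n - b). P (Suc (card S))} else 0)"
proof -
  define X where "X = {S \<in> distinct_partitions_in B (n - b). P (Suc (card S)) \<and> b \<le> n}"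
  have b_notin: "b \<notin> S" if "S \<in> distinct_partitions_in B m" for S m
    using that assms(2) unfolding distinct_partitions_in_def by blast
  have "card {S \<in> distinct_partitions_in (insert b B) n. P (card S)} =
     card {S \<in> distinct_partitions_in B n. P (card S)} + card (insert b ` X)"
    unfolding distinct_partitions_in_insert[OF assms(2,3)] X_def[symmetric]
  proof (rule card_Un_disjoint)
    show "{S \<in> distinct_partitions_in B n. P (card S)} \<inter> insert b ` X = {}"
      using b_notin by blast
  qed (use finite_distinct_partitions_in[OF assms(1)] in \<open>simp_all add: X_def\<close>)
  also have "card (insert b ` X) = card X"
  proof (rule card_image, rule inj_onI)
    fix S T assume "S \<in> X" "T \<in> X" "insert b S = insert b T"
    moreover have "b \<notin> S" "b \<notin> T" using \<open>S \<in> X\<close> \<open>T \<in> X\<close> b_notin unfolding X_def by auto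
    ultimately show "S = T" by (metis Diff_insert_absorb)
  qed
  also have "X = (if b \<le> n then {S \<in> distinct_partitions_in B (n - b). P (Suc (card S))} else {})"
    unfolding X_def by auto
  finally show ?thesis by simp
qed

lemma q_even_empty: "q_even {} n = (if n = 0 then 1 else 0)"
proof -
  have "{S \<in> distinct_partitions_in {} n. even (card S)} = (if n = 0 then {{}} else {})"
    by (auto simp: distinct_partitions_in_empty)
  then show ?thesis by (simp add: q_even_def)
qed

lemma q_odd_empty: "q_odd {} n = 0"
  by (simp add: q_odd_def distinct_partitions_in_empty)

lemma q_even_insert:
  assumes "finite B" "b \<notin> B" "b > 0"
  shows "q_even (insert b B) n = q_even B n + (if b \<le> n then q_odd B (n - b) else 0)"
  unfolding q_even_def q_odd_def using card_distinct_partitions_in_insert[OF assms, where P = even] by simp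

lemma q_odd_insert:
  assumes "finite B" "b \<notin> B" "b > 0"
  shows "q_odd (insert b B) n = q_odd B n + (if b \<le> n then q_even B (n - b) else 0)"
  unfolding q_even_def q_odd_def using card_distinct_partitions_in_insert[OF assms, where P = odd] by simp

lemma distinct_partitions_in_restrict:
  assumes "k \<le> n"
  shows "distinct_partitions_in (A \<inter> {1..n}) k = distinct_partitions_in A k"
proof -
  have "x \<le> n" if "S \<in> distinct_partitions_in A k" "x \<in> S" for S x
    using that assms sum.remove[of S x "\<lambda>x. x"] by (auto simp: distinct_partitions_in_def)
  then show ?thesis
    unfolding distinct_partitions_in_def by (auto simp: Suc_le_eq) (metis gr0I)
qed

unbundle fps_syntax

definition partition_fps :: "nat set \<Rightarrow> int fps" where
  "partition_fps B = Abs_fps (\<lambda>n. int (card (partitions_in B n)))"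

definition parts_fps :: "nat set \<Rightarrow> int fps" where
  "parts_fps B = Abs_fps (\<lambda>n. int (Np B n))"

definition signed_distinct_partition_fps :: "nat set \<Rightarrow> int fps" where
  "signed_distinct_partition_fps B = Abs_fps (\<lambda>n. int (q_even B n) - int (q_odd B n))"

definition multiples_fps :: "nat \<Rightarrow> int fps" where
  "multiples_fps b = Abs_fps (\<lambda>n. if b dvd n then 1 else 0)"

definition weighted_multiples_fps :: "nat \<Rightarrow> int fps" where
  "weighted_multiples_fps b = Abs_fps (\<lambda>n. if b dvd n then int (n div b) else 0)"

definition positive_multiples_fps :: "nat \<Rightarrow> int fps" where
  "positive_multiples_fps b = Abs_fps (\<lambda>n. if b dvd n \<and> n > 0 then 1 else 0)"

lemma sum_multiples_reindex:
  fixes g :: "nat \<Rightarrow> 'a :: comm_monoid_add"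
  assumes "b > 0"
  shows "(\<Sum>i=0..n. if b dvd i then g i else 0) = (\<Sum>j\<le>n div b. g (j * b))"
proof -
  have "(\<lambda>j. j * b) ` {..n div b} = {i \<in> {0..n}. b dvd i}"
  proof (intro equalityI subsetI)
    fix i assume "i \<in> {i \<in> {0..n}. b dvd i}"
    then obtain j where "i = j * b" "j * b \<le> n" by (metis atLeastAtMost_iff dvd_def mem_Collect_eq mult.commute)
    then show "i \<in> (\<lambda>j. j * b) ` {..n div b}"
      using assms by (auto simp: less_eq_div_iff_mult_less_eq)
  qed (use assms in \<open>auto simp: less_eq_div_iff_mult_less_eq\<close>)
  moreover have "inj_on (\<lambda>j. j * b) {..n div b}"
    using assms by (auto simp: inj_on_def)
  ultimately have "(\<Sum>j\<le>n div b. g (j * b)) = sum g {i \<in> {0..n}. b dvd i}"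
    using sum.reindex[of "\<lambda>j. j * b" "{..n div b}" g] by (simp add: comp_def)
  also have "\<dots> = (\<Sum>i=0..n. if b dvd i then g i else 0)"
    by (rule sum.inter_filter) simp
  finally show ?thesis by simp
qed

lemma multiples_fps_mult_nth:
  assumes "b > 0"
  shows "(multiples_fps b * f) $ n = (\<Sum>j\<le>n div b. f $ (n - j * b))"
proof -
  have "(multiples_fps b * f) $ n = (\<Sum>i=0..n. if b dvd i then f $ (n - i) else 0)"
    unfolding fps_mult_nth by (intro sum.cong) (auto simp: multiples_fps_def)
  then show ?thesis using sum_multiples_reindex[OF assms, of "\<lambda>i. f $ (n - i)"] by simp
qed

lemma weighted_multiples_fps_mult_nth:
  assumes "b > 0"
  shows "(weighted_multiples_fps b * f) $ n = (\<Sum>j\<le>n div b. of_nat j * f $ (n - j * b))"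
proof -
  have "(weighted_multiples_fps b * f) $ n =
      (\<Sum>i=0..n. if b dvd i then of_nat (i div b) * f $ (n - i) else 0)"
    unfolding fps_mult_nth by (intro sum.cong) (auto simp: weighted_multiples_fps_def)
  then show ?thesis
    using sum_multiples_reindex[OF assms, of "\<lambda>i. of_nat (i div b) * f $ (n - i)"] assms by simp
qed

lemma multiples_fps_times_one_minus_X_power:
  assumes "b > 0"
  shows "multiples_fps b * (1 - fps_X ^ b) = 1"
proof (rule fps_ext)
  fix n
  have "b dvd n \<longleftrightarrow> n = 0" if "n < b" using that by (auto dest: dvd_imp_le)
  moreover have "b dvd n \<longleftrightarrow> b dvd (n - b)" if "\<not> n < b" using that by (simp add: dvd_minus_self)
  ultimately show "(multiples_fps b * (1 - fps_X ^ b)) $ n = (1 :: int fps) $ n"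
    using assms by (cases "n < b")
      (simp_all add: algebra_simps fps_X_power_mult_nth multiples_fps_def)
qed

lemma weighted_multiples_fps_times_one_minus_X_power:
  assumes "b > 0"
  shows "weighted_multiples_fps b * (1 - fps_X ^ b) = positive_multiples_fps b"
proof (rule fps_ext)
  fix n
  have "b dvd n \<longleftrightarrow> n = 0" if "n < b" using that by (auto dest: dvd_imp_le)
  moreover have "b dvd n \<longleftrightarrow> b dvd (n - b)" if "\<not> n < b" using that by (simp add: dvd_minus_self)
  moreover have "n div b = Suc ((n - b) div b)" if "\<not> n < b" using that assms le_div_geq by simp
  ultimately show "(weighted_multiples_fps b * (1 - fps_X ^ b)) $ n = positive_multiples_fps b $ n"
    using assms by (cases "n < b")
      (auto simp: algebra_simps fps_X_power_mult_nth weighted_multiples_fps_def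
        positive_multiples_fps_def)
qed

lemma partition_fps_insert:
  assumes "finite B" "0 \<notin> insert b B" "b \<notin> B"
  shows "partition_fps (insert b B) = multiples_fps b * partition_fps B"
  using assms
  by (intro fps_ext) (simp add: multiples_fps_mult_nth partition_fps_def card_partitions_in_insert)

text \<open>A partition using the part \<open>b\<close> exactly \<open>j\<close> times has \<open>j\<close> more parts than its
  restriction to \<open>B\<close>; \<open>weighted_multiples_fps b\<close> records these extra parts.\<close>

lemma parts_fps_insert:
  assumes "finite B" "0 \<notin> insert b B" "b \<notin> B"
  shows "parts_fps (insert b B) =
    multiples_fps b * parts_fps B + weighted_multiples_fps b * partition_fps B"
  using assms
  by (intro fps_ext) (simp add: multiples_fps_mult_nth weighted_multiples_fps_mult_nth
      parts_fps_def partition_fps_def Np_insert sum.distrib)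

lemma signed_distinct_partition_fps_insert:
  assumes "finite B" "b \<notin> B" "b > 0"
  shows "signed_distinct_partition_fps (insert b B) = (1 - fps_X ^ b) * signed_distinct_partition_fps B"
  using assms
  by (intro fps_ext) (simp add: algebra_simps fps_X_power_mult_nth signed_distinct_partition_fps_def
      q_even_insert q_odd_insert)

lemma partition_fps_mult_signed_distinct_partition_fps:
  assumes "finite B" "0 \<notin> B"
  shows "partition_fps B * signed_distinct_partition_fps B = 1"
  using assms
proof (induction B rule: finite_induct)
  case empty
  have "partition_fps {} = 1" "signed_distinct_partition_fps {} = 1"
    by (simp_all add: fps_ext partition_fps_def signed_distinct_partition_fps_def
        partitions_in_empty q_even_empty q_odd_empty)
  then show ?case by simp
next
  case (insert b B)
  then have "b > 0" by auto
  have "partition_fps (insert b B) * signed_distinct_partition_fps (insert b B) =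
      (multiples_fps b * (1 - fps_X ^ b)) * (partition_fps B * signed_distinct_partition_fps B)"
    using insert \<open>b > 0\<close>
    by (simp add: partition_fps_insert signed_distinct_partition_fps_insert mult_ac)
  then show ?case
    using insert \<open>b > 0\<close> by (simp add: multiples_fps_times_one_minus_X_power)
qed

lemma parts_fps_mult_signed_distinct_partition_fps:
  assumes "finite B" "0 \<notin> B"
  shows "parts_fps B * signed_distinct_partition_fps B = (\<Sum>b\<in>B. positive_multiples_fps b)"
  using assms
proof (induction B rule: finite_induct)
  case empty
  have "parts_fps {} = 0" by (simp add: fps_ext parts_fps_def Np_def partitions_in_empty)
  then show ?case by simp
next
  case (insert b B)
  then have "b > 0" by auto
  have "parts_fps (insert b B) * signed_distinct_partition_fps (insert b B) =
      (multiples_fps b * (1 - fps_X ^ b)) * (parts_fps B * signed_distinct_partition_fps B) +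
      (weighted_multiples_fps b * (1 - fps_X ^ b)) * (partition_fps B * signed_distinct_partition_fps B)"
    using insert \<open>b > 0\<close>
    by (simp add: parts_fps_insert signed_distinct_partition_fps_insert algebra_simps)
  then show ?case
    using insert \<open>b > 0\<close>
    by (simp add: multiples_fps_times_one_minus_X_power weighted_multiples_fps_times_one_minus_X_power
        partition_fps_mult_signed_distinct_partition_fps add.commute)
qed

theorem Np_convolution_eq_card_divisors:
  fixes A :: "nat set"
  assumes "n > 0"
  shows "(\<Sum>k=1..n. int (Np A k) * (int (q_even A (n - k)) - int (q_odd A (n - k))))
           = int (card {a \<in> A. a dvd n})"
proof -
  define B where "B = A \<inter> {1..n}"
  have B: "finite B" "0 \<notin> B" unfolding B_def by auto
  have "Np A k = Np B k" "q_even A (n - k) = q_even B (n - k)" "q_odd A (n - k) = q_odd B (n - k)"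
    if "k \<le> n" for k
    using partitions_in_restrict[OF that] distinct_partitions_in_restrict[of "n - k" n]
    unfolding B_def Np_def q_even_def q_odd_def by simp_all
  then have "(\<Sum>k=1..n. int (Np A k) * (int (q_even A (n - k)) - int (q_odd A (n - k))))
      = (\<Sum>k=1..n. parts_fps B $ k * signed_distinct_partition_fps B $ (n - k))"
    by (intro sum.cong) (simp_all add: parts_fps_def signed_distinct_partition_fps_def)
  also have "\<dots> = (\<Sum>k=0..n. parts_fps B $ k * signed_distinct_partition_fps B $ (n - k))"
    by (simp add: sum.atLeast_Suc_atMost parts_fps_def Np_def partitions_in_zero)
  also have "\<dots> = (\<Sum>b\<in>B. positive_multiples_fps b $ n)"
    using parts_fps_mult_signed_distinct_partition_fps[OF B]
    by (simp add: fps_mult_nth[symmetric] fps_sum_nth)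
  also have "\<dots> = int (card {b \<in> B. b dvd n})"
    using B assms by (simp add: positive_multiples_fps_def sum.inter_filter[symmetric])
  also have "{b \<in> B. b dvd n} = {a \<in> A. a dvd n}"
    using assms by (auto simp: B_def Suc_le_eq dvd_imp_le intro: gr0I)
  finally show ?thesis .
qed

lemma card_prime_power_divisors:
  fixes p n :: nat
  assumes "prime p" "n > 0"
  shows "card {d \<in> range (\<lambda>i. p ^ i). d dvd n} = Suc (multiplicity p n)"
proof -
  have "p ^ i dvd n \<longleftrightarrow> i \<le> multiplicity p n" for i
    using assms by (intro power_dvd_iff_le_multiplicity) auto
  then have "{d \<in> range (\<lambda>i. p ^ i). d dvd n} = (\<lambda>i. p ^ i) ` {..multiplicity p n}"
    by auto
  moreover have "inj_on (\<lambda>i. p ^ i) {..multiplicity p n}"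
    using prime_gt_1_nat[OF assms(1)] by (auto simp: inj_on_def)
  ultimately show ?thesis by (simp add: card_image)
qed

theorem corollary7:
  fixes p n :: nat
  assumes "prime p" and "n > 0"
  defines "A \<equiv> range (\<lambda>i::nat. p ^ i)"
  shows "(\<Sum>k=1..n. int (Np A k) * (int (q_even A (n - k)) - int (q_odd A (n - k))))
           = int (multiplicity p n) + 1"
  using Np_convolution_eq_card_divisors[OF assms(2), of A]
    card_prime_power_divisors[OF assms(1,2)]
  unfolding A_def by simp

end
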